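(* Let $X$ be a real Banach space with a normalized Schauder basis $\mathcal B=(e_n)_{n=1}^\infty$ with biorthogonal functionals $(e_n^* )$, let $\mathcal E=(\varepsilon_n)_{n=1}^\infty$ be a sequence of nonnegative numbers, and let $K=K_{\mathcal B,\mathcal E}$. Then: (1) $r^{\rm ext}(K)\le r^{\rm unc}(K)$; (2) if $r^{\rm ext}(K)<\infty$ then $r^{\rm ext}(K)=\sup_{x\in K}\|x\|$; (3) if $r^{\rm unc}(K)<\infty$ then $r^{\rm ext}(K)=r^{\rm unc}(K)=\sup_{x\in K}\|x\|$.
   Context: The brick is $K_{\mathcal B,\mathcal E}=\{x\in X:\ |e_n^*(x)|\le\varepsilon_n \text{ for all } n\}$. A point $x_0\in A$ is an extreme point of $A$ if for every nonzero $x\in X$ there is $\lambda\in[-1,1]$ with $x_0+\lambda x\notin A$ (for a brick, these are exactly the $x_0$ with $|e_n^*(x_0)|=\varepsilon_n$ for all $n$). The extreme radius $r^{\rm ext}(K)$ is the supremum of $\|x_0\|$ over extreme points $x_0$ of $K$ if an extreme point exists, and $\infty$ otherwise. The unconditional radius is $r^{\rm unc}(K)=\sup_{\theta_n=\pm1}\|\sum_{n=1}^\infty\theta_n\varepsilon_ne_n\|$, where the norm of a divergent series is $\infty$. *)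

theory Defs
  imports "HOL-Analysis.Analysis"
begin

text \<open>A Schauder basis of a Banach space: every vector has a unique norm-convergent
  expansion in the basis. Indices start at 0 (the paper's index n corresponds to n-1).\<close>
definition schauder_basis :: "(nat \<Rightarrow> 'a::banach) \<Rightarrow> bool" where
  "schauder_basis e \<longleftrightarrow> (\<forall>x. \<exists>!a::nat \<Rightarrow> real. (\<lambda>k. a k *\<^sub>R e k) sums x)"

definition coord :: "(nat \<Rightarrow> 'a::banach) \<Rightarrow> nat \<Rightarrow> 'a \<Rightarrow> real" where
  "coord e n x = (THE a::nat \<Rightarrow> real. (\<lambda>k. a k *\<^sub>R e k) sums x) n"

definition brick :: "(nat \<Rightarrow> 'a::banach) \<Rightarrow> (nat \<Rightarrow> real) \<Rightarrow> 'a set" where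
  "brick e eps = {x. \<forall>n. \<bar>coord e n x\<bar> \<le> eps n}"

definition is_extreme_pt :: "'a::real_vector set \<Rightarrow> 'a \<Rightarrow> bool" where
  "is_extreme_pt A x0 \<longleftrightarrow> x0 \<in> A \<and>
     (\<forall>x. x \<noteq> 0 \<longrightarrow> (\<exists>t\<in>{-1..1::real}. x0 + t *\<^sub>R x \<notin> A))"

definition ext_radius :: "'a::real_normed_vector set \<Rightarrow> ereal" where
  "ext_radius A = (if \<exists>x0. is_extreme_pt A x0
     then (SUP x0\<in>{x0. is_extreme_pt A x0}. ereal (norm x0)) else \<infinity>)"

definition series_norm :: "(nat \<Rightarrow> 'a::real_normed_vector) \<Rightarrow> ereal" where
  "series_norm f = (if summable f then ereal (norm (suminf f)) else \<infinity>)"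

definition unc_radius :: "(nat \<Rightarrow> 'a::banach) \<Rightarrow> (nat \<Rightarrow> real) \<Rightarrow> ereal" where
  "unc_radius e eps = (SUP \<theta>\<in>{\<theta>::nat \<Rightarrow> real. \<forall>n. \<theta> n = 1 \<or> \<theta> n = -1}.
      series_norm (\<lambda>n. (\<theta> n * eps n) *\<^sub>R e n))"

end

theory Submission imports Defs begin

text \<open>By uniqueness of basis expansions, the extreme points of the brick are exactly the points
  all of whose coordinates have modulus eps n, i.e. the sums of the convergent series
  \<Sum> theta n * eps n * e n with signs theta n = 1 or -1. This gives (1), and the reverse
  inequality when every such series converges. For (2): a point of the brick with extremal
  coordinates from index N + 1 on lies on a segment between two points of the brick with
  extremal coordinates from N on, so by induction every convex set containing the extreme points
  contains it. The points agreeing with a given x in the first N coordinates and with a fixed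
  extreme point afterwards converge to x, so the brick lies in the closed ball of radius r^ext.\<close>

lemma coord_sums:
  assumes "schauder_basis e"
  shows "(\<lambda>k. coord e k x *\<^sub>R e k) sums x"
proof -
  from assms have "\<exists>!a::nat \<Rightarrow> real. (\<lambda>k. a k *\<^sub>R e k) sums x"
    unfolding schauder_basis_def by blast
  from theI'[OF this] show ?thesis
    unfolding coord_def .
qed

lemma coord_unique:
  assumes "schauder_basis e" and "(\<lambda>k. a k *\<^sub>R e k) sums x"
  shows "coord e n x = a n"
proof -
  from assms(1) have "\<exists>!a::nat \<Rightarrow> real. (\<lambda>k. a k *\<^sub>R e k) sums x"
    unfolding schauder_basis_def by blast
  from the1_equality[where P = "\<lambda>a. (\<lambda>k. a k *\<^sub>R e k) sums x", OF this assms(2)]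
  show ?thesis
    unfolding coord_def by simp
qed

lemma linear_coord:
  assumes "schauder_basis e"
  shows "linear (coord e n)"
proof
  show "coord e n (x + y) = coord e n x + coord e n y" for x y
  proof (rule coord_unique[OF assms])
    show "(\<lambda>k. (coord e k x + coord e k y) *\<^sub>R e k) sums (x + y)"
      using sums_add[OF coord_sums[OF assms, of x] coord_sums[OF assms, of y]]
      by (simp add: scaleR_add_left)
  qed
  show "coord e n (c *\<^sub>R x) = c *\<^sub>R coord e n x" for c x
  proof -
    have "(\<lambda>k. (c * coord e k x) *\<^sub>R e k) sums (c *\<^sub>R x)"
      using sums_scaleR_right[OF coord_sums[OF assms, of x], of c] by simp
    from coord_unique[OF assms this] show ?thesis
      by simp
  qed
qed

lemma schauder_basis_nonzero:
  assumes "schauder_basis e"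
  shows "e n \<noteq> 0"
proof
  assume "e n = 0"
  then have "(\<lambda>k. (if k = n then 1 else 0) *\<^sub>R e k) = (\<lambda>k. 0)"
    by auto
  then have "(\<lambda>k. (if k = n then 1 else 0) *\<^sub>R e k) sums 0"
    by simp
  from coord_unique[OF assms this, of n] have "coord e n 0 = 1"
    by simp
  moreover have "(\<lambda>k. 0 *\<^sub>R e k) sums 0"
    by simp
  from coord_unique[OF assms this, of n] have "coord e n 0 = 0"
    by simp
  ultimately show False
    by simp
qed

lemma coord_basis:
  assumes "schauder_basis e"
  shows "coord e n (e m) = (if n = m then 1 else 0)"
proof -
  have "(\<lambda>k. (if k = m then 1 else 0) *\<^sub>R e k) = (\<lambda>k. if k = m then e k else 0)"
    by auto
  then have "(\<lambda>k. (if k = m then 1 else 0) *\<^sub>R e k) sums e m"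
    using sums_single[of m e] by simp
  from coord_unique[OF assms this] show ?thesis .
qed

lemma coord_add_scaleR_basis:
  assumes "schauder_basis e"
  shows "coord e n (x + c *\<^sub>R e m) = coord e n x + (if n = m then c else 0)"
proof -
  have "coord e n (x + c *\<^sub>R e m) = coord e n x + c * coord e n (e m)"
    using linear_coord[OF assms] by (simp add: linear_add linear_scale)
  then show ?thesis
    by (simp add: coord_basis[OF assms])
qed

lemma coord_partial_sum:
  assumes "schauder_basis e"
  shows "coord e n (\<Sum>k<N. c k *\<^sub>R e k) = (if n < N then c n else 0)"
proof -
  have "coord e n (\<Sum>k<N. c k *\<^sub>R e k) = (\<Sum>k<N. c k * (if n = k then 1 else 0))"
    using linear_coord[OF assms] by (simp add: linear_sum linear_scale coord_basis[OF assms])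
  also have "\<dots> = (\<Sum>k<N. if n = k then c k else 0)"
    by (rule sum.cong) auto
  finally show ?thesis
    by simp
qed

lemma exists_coord_nonzero:
  assumes "schauder_basis e" and "x \<noteq> 0"
  shows "\<exists>m. coord e m x \<noteq> 0"
proof (rule ccontr)
  assume "\<not> ?thesis"
  with coord_sums[OF assms(1), of x] have "(\<lambda>k. 0) sums x"
    by simp
  with assms(2) show False
    using sums_unique2[OF _ sums_zero] by blast
qed

lemma is_extreme_pt_brick_iff:
  assumes sb: "schauder_basis e"
  shows "is_extreme_pt (brick e eps) x0 \<longleftrightarrow> (\<forall>n. \<bar>coord e n x0\<bar> = eps n)"
proof
  assume ex: "is_extreme_pt (brick e eps) x0"
  then have inK: "\<bar>coord e n x0\<bar> \<le> eps n" for n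
    unfolding is_extreme_pt_def brick_def by auto
  show "\<forall>n. \<bar>coord e n x0\<bar> = eps n"
  proof (rule ccontr)
    assume "\<not> ?thesis"
    then obtain n where "\<bar>coord e n x0\<bar> < eps n"
      using inK by (meson order_le_less)
    define d where "d = eps n - \<bar>coord e n x0\<bar>"
    have "d > 0" and "d *\<^sub>R e n \<noteq> 0"
      using \<open>\<bar>coord e n x0\<bar> < eps n\<close> schauder_basis_nonzero[OF sb] by (auto simp: d_def)
    then obtain t where t: "t \<in> {-1..1}" "x0 + (t * d) *\<^sub>R e n \<notin> brick e eps"
      using ex unfolding is_extreme_pt_def by fastforce
    have "\<bar>t * d\<bar> \<le> d"
      using t(1) \<open>d > 0\<close> by (auto simp: abs_mult intro: mult_left_le_one_le)
    then have "x0 + (t * d) *\<^sub>R e n \<in> brick e eps"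
      using inK by (auto simp: brick_def coord_add_scaleR_basis[OF sb] d_def)
    with t(2) show False
      by blast
  qed
next
  assume eq: "\<forall>n. \<bar>coord e n x0\<bar> = eps n"
  show "is_extreme_pt (brick e eps) x0"
    unfolding is_extreme_pt_def
  proof (intro conjI allI impI)
    show "x0 \<in> brick e eps"
      using eq unfolding brick_def by simp
    fix x :: 'a
    assume "x \<noteq> 0"
    then obtain m where m: "coord e m x \<noteq> 0"
      using exists_coord_nonzero[OF sb] by blast
    \<comment> \<open>move in the direction of x that pushes the m-th coordinate further away from 0\<close>
    define t :: real where "t = (if coord e m x0 * coord e m x \<ge> 0 then 1 else -1)"
    have "\<bar>coord e m x0 + t * coord e m x\<bar> = \<bar>coord e m x0\<bar> + \<bar>coord e m x\<bar>"
    proof (cases "coord e m x0 * coord e m x \<ge> 0")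
      case True
      then have "t = 1" "(0 \<le> coord e m x0 \<and> 0 \<le> coord e m x) \<or> (coord e m x0 \<le> 0 \<and> coord e m x \<le> 0)"
        by (simp_all add: t_def zero_le_mult_iff)
      then show ?thesis
        by auto
    next
      case False
      then have "t = -1" "(0 \<le> coord e m x0 \<and> coord e m x \<le> 0) \<or> (coord e m x0 \<le> 0 \<and> 0 \<le> coord e m x)"
        by (auto simp: t_def zero_le_mult_iff)
      then show ?thesis
        by auto
    qed
    then have "\<bar>coord e m (x0 + t *\<^sub>R x)\<bar> > eps m"
      using eq m linear_coord[OF sb] by (simp add: linear_add linear_scale)
    then have "x0 + t *\<^sub>R x \<notin> brick e eps"
      unfolding brick_def by (auto simp: not_le)
    moreover have "t \<in> {-1..1}"
      unfolding t_def by simp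
    ultimately show "\<exists>t\<in>{-1..1}. x0 + t *\<^sub>R x \<notin> brick e eps"
      by blast
  qed
qed

lemma mem_closed_segment_translate_scaleR:
  fixes y v :: "'a::real_vector"
  assumes "s \<le> 0" and "0 \<le> t"
  shows "y \<in> closed_segment (y + s *\<^sub>R v) (y + t *\<^sub>R v)"
proof (cases "s = t")
  case True
  with assms show ?thesis
    by simp
next
  case False
  define u where "u = - s / (t - s)"
  have "0 \<le> u" "u \<le> 1" and "(1 - u) * s + u * t = 0"
    using assms False by (auto simp: u_def field_simps)
  moreover have "(1 - u) *\<^sub>R (y + s *\<^sub>R v) + u *\<^sub>R (y + t *\<^sub>R v)
      = y + ((1 - u) * s + u * t) *\<^sub>R v"
    by (simp add: algebra_simps)
  ultimately have "y = (1 - u) *\<^sub>R (y + s *\<^sub>R v) + u *\<^sub>R (y + t *\<^sub>R v)"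
    by simp
  with \<open>0 \<le> u\<close> \<open>u \<le> 1\<close> show ?thesis
    unfolding in_segment by blast
qed

lemma brick_tail_extreme_mem_convex:
  assumes sb: "schauder_basis e" and "convex C"
    and ext: "\<And>z. \<forall>n. \<bar>coord e n z\<bar> = eps n \<Longrightarrow> z \<in> C"
  shows "y \<in> brick e eps \<Longrightarrow> \<forall>n\<ge>N. \<bar>coord e n y\<bar> = eps n \<Longrightarrow> y \<in> C"
proof (induction N arbitrary: y)
  case 0
  then show ?case
    using ext by simp
next
  case (Suc N)
  define c where "c = coord e N y"
  have "\<bar>c\<bar> \<le> eps N"
    using Suc.prems(1) unfolding brick_def c_def by simp
  have "y + (s - c) *\<^sub>R e N \<in> C" if "\<bar>s\<bar> = eps N" for s
  proof (rule Suc.IH)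
    show "y + (s - c) *\<^sub>R e N \<in> brick e eps"
      using Suc.prems(1) that by (auto simp: brick_def coord_add_scaleR_basis[OF sb] c_def)
    show "\<forall>n\<ge>N. \<bar>coord e n (y + (s - c) *\<^sub>R e N)\<bar> = eps n"
      using Suc.prems(2) that by (auto simp: coord_add_scaleR_basis[OF sb] c_def not_less_eq_eq)
  qed
  then have "closed_segment (y + (- eps N - c) *\<^sub>R e N) (y + (eps N - c) *\<^sub>R e N) \<subseteq> C"
    using \<open>\<bar>c\<bar> \<le> eps N\<close> \<open>convex C\<close> by (intro closed_segment_subset) auto
  moreover have "y \<in> closed_segment (y + (- eps N - c) *\<^sub>R e N) (y + (eps N - c) *\<^sub>R e N)"
    using \<open>\<bar>c\<bar> \<le> eps N\<close> by (intro mem_closed_segment_translate_scaleR) auto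
  ultimately show ?case
    by blast
qed

lemma brick_subset_closed_convex:
  assumes sb: "schauder_basis e" and "convex C" and "closed C"
    and ext: "\<And>z. \<forall>n. \<bar>coord e n z\<bar> = eps n \<Longrightarrow> z \<in> C"
    and x0: "\<forall>n. \<bar>coord e n x0\<bar> = eps n"
  shows "brick e eps \<subseteq> C"
proof
  fix x
  assume x: "x \<in> brick e eps"
  define Y where "Y N = x0 - (\<Sum>k<N. coord e k (x0 - x) *\<^sub>R e k)" for N
  have coord_Y: "coord e n (Y N) = (if n < N then coord e n x else coord e n x0)" for n N
    using linear_coord[OF sb] by (simp add: Y_def linear_diff coord_partial_sum[OF sb])
  have "Y N \<in> C" for N
  proof (rule brick_tail_extreme_mem_convex[OF sb \<open>convex C\<close> ext])
    show "Y N \<in> brick e eps"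
      using x x0 by (simp add: brick_def coord_Y)
    show "\<forall>n\<ge>N. \<bar>coord e n (Y N)\<bar> = eps n"
      using x0 by (simp add: coord_Y)
  qed
  moreover have "Y \<longlonglongrightarrow> x0 - (x0 - x)"
    unfolding Y_def using coord_sums[OF sb, of "x0 - x"] unfolding sums_def
    by (intro tendsto_diff tendsto_const)
  ultimately show "x \<in> C"
    using closed_sequentially[OF \<open>closed C\<close>] by auto
qed

definition sign_seqs :: "(nat \<Rightarrow> real) set" where
  "sign_seqs = {\<theta>. \<forall>n. \<theta> n = 1 \<or> \<theta> n = -1}"

lemma unc_radius_eq_SUP_sign_seqs:
  "unc_radius e eps = (SUP \<theta>\<in>sign_seqs. series_norm (\<lambda>n. (\<theta> n * eps n) *\<^sub>R e n))"
  unfolding unc_radius_def sign_seqs_def ..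

lemma series_norm_sums: "f sums x \<Longrightarrow> series_norm f = ereal (norm x)"
  unfolding series_norm_def by (simp add: sums_iff)

lemma is_extreme_pt_brick_iff_signed_sums:
  assumes sb: "schauder_basis e" and ep: "\<forall>n. eps n \<ge> 0"
  shows "is_extreme_pt (brick e eps) x \<longleftrightarrow>
    (\<exists>\<theta>\<in>sign_seqs. (\<lambda>n. (\<theta> n * eps n) *\<^sub>R e n) sums x)"
proof
  assume "is_extreme_pt (brick e eps) x"
  then have eq: "\<bar>coord e n x\<bar> = eps n" for n
    using is_extreme_pt_brick_iff[OF sb] by blast
  define \<theta> where "\<theta> n = (if coord e n x \<ge> 0 then 1 else (-1::real))" for n
  have "\<theta> n * eps n = coord e n x" for n
    using eq[of n] unfolding \<theta>_def by (auto simp: abs_if)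
  then have "(\<lambda>n. (\<theta> n * eps n) *\<^sub>R e n) sums x"
    using coord_sums[OF sb, of x] by simp
  moreover have "\<theta> \<in> sign_seqs"
    unfolding sign_seqs_def \<theta>_def by simp
  ultimately show "\<exists>\<theta>\<in>sign_seqs. (\<lambda>n. (\<theta> n * eps n) *\<^sub>R e n) sums x"
    by blast
next
  assume "\<exists>\<theta>\<in>sign_seqs. (\<lambda>n. (\<theta> n * eps n) *\<^sub>R e n) sums x"
  then obtain \<theta> where "\<theta> \<in> sign_seqs" and sums: "(\<lambda>n. (\<theta> n * eps n) *\<^sub>R e n) sums x"
    by blast
  have "\<bar>coord e n x\<bar> = eps n" for n
  proof -
    have "\<theta> n = 1 \<or> \<theta> n = -1"
      using \<open>\<theta> \<in> sign_seqs\<close> unfolding sign_seqs_def by blast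
    then show ?thesis
      using coord_unique[OF sb sums, of n] ep by auto
  qed
  then show "is_extreme_pt (brick e eps) x"
    using is_extreme_pt_brick_iff[OF sb] by blast
qed

lemma series_norm_le_unc_radius:
  "\<theta> \<in> sign_seqs \<Longrightarrow> series_norm (\<lambda>n. (\<theta> n * eps n) *\<^sub>R e n) \<le> unc_radius e eps"
  unfolding unc_radius_eq_SUP_sign_seqs by (rule SUP_upper)

lemma norm_extreme_pt_brick_le_unc_radius:
  assumes sb: "schauder_basis e" and ep: "\<forall>n. eps n \<ge> 0"
    and "is_extreme_pt (brick e eps) x"
  shows "ereal (norm x) \<le> unc_radius e eps"
proof -
  obtain \<theta> where "\<theta> \<in> sign_seqs" and "(\<lambda>n. (\<theta> n * eps n) *\<^sub>R e n) sums x"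
    using assms(3) is_extreme_pt_brick_iff_signed_sums[OF sb ep] by blast
  then show ?thesis
    using series_norm_le_unc_radius[of \<theta> eps e] by (simp add: series_norm_sums)
qed

lemma ext_radius_brick_le_unc_radius:
  assumes sb: "schauder_basis e" and ep: "\<forall>n. eps n \<ge> 0"
  shows "ext_radius (brick e eps) \<le> unc_radius e eps"
proof (cases "\<exists>x0. is_extreme_pt (brick e eps) x0")
  case True
  have "ext_radius (brick e eps) = (SUP x0\<in>{x0. is_extreme_pt (brick e eps) x0}. ereal (norm x0))"
    unfolding ext_radius_def using True by simp
  also have "\<dots> \<le> unc_radius e eps"
    by (intro SUP_least) (simp add: norm_extreme_pt_brick_le_unc_radius[OF sb ep])
  finally show ?thesis .
next
  case False
  \<comment> \<open>then the series with all signs +1 diverges, since its sum would be an extreme point\<close>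
  define one :: "nat \<Rightarrow> real" where "one = (\<lambda>_. 1)"
  have "one \<in> sign_seqs"
    unfolding sign_seqs_def one_def by simp
  then have "\<not> summable (\<lambda>n. (one n * eps n) *\<^sub>R e n)"
    using False is_extreme_pt_brick_iff_signed_sums[OF sb ep] summable_sums by blast
  then have "series_norm (\<lambda>n. (one n * eps n) *\<^sub>R e n) = \<infinity>"
    unfolding series_norm_def by simp
  with series_norm_le_unc_radius[OF \<open>one \<in> sign_seqs\<close>, of eps e] show ?thesis
    by simp
qed

lemma unc_radius_le_ext_radius_brick:
  assumes sb: "schauder_basis e" and ep: "\<forall>n. eps n \<ge> 0"
    and "unc_radius e eps < \<infinity>"
  shows "unc_radius e eps \<le> ext_radius (brick e eps)"
proof -
  have summable: "summable (\<lambda>n. (\<theta> n * eps n) *\<^sub>R e n)" if "\<theta> \<in> sign_seqs" for \<theta>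
    using series_norm_le_unc_radius[OF that, of eps e] \<open>unc_radius e eps < \<infinity>\<close>
    by (auto simp: series_norm_def split: if_splits)
  have extreme: "is_extreme_pt (brick e eps) (suminf (\<lambda>n. (\<theta> n * eps n) *\<^sub>R e n))"
    if "\<theta> \<in> sign_seqs" for \<theta>
    using that summable_sums[OF summable[OF that]] is_extreme_pt_brick_iff_signed_sums[OF sb ep]
    by blast
  have "(\<lambda>_. 1) \<in> sign_seqs"
    unfolding sign_seqs_def by simp
  from extreme[OF this] have E: "ext_radius (brick e eps) =
      (SUP x0\<in>{x0. is_extreme_pt (brick e eps) x0}. ereal (norm x0))"
    unfolding ext_radius_def by auto
  show ?thesis
    unfolding unc_radius_eq_SUP_sign_seqs
  proof (rule SUP_least)
    fix \<theta>
    assume "\<theta> \<in> sign_seqs"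
    then have "series_norm (\<lambda>n. (\<theta> n * eps n) *\<^sub>R e n)
        = ereal (norm (suminf (\<lambda>n. (\<theta> n * eps n) *\<^sub>R e n)))"
      using summable by (simp add: series_norm_def)
    also have "\<dots> \<le> ext_radius (brick e eps)"
      unfolding E using extreme[OF \<open>\<theta> \<in> sign_seqs\<close>] by (rule SUP_upper[OF CollectI])
    finally show "series_norm (\<lambda>n. (\<theta> n * eps n) *\<^sub>R e n) \<le> ext_radius (brick e eps)" .
  qed
qed

lemma ext_radius_brick_eq_SUP_norm:
  assumes sb: "schauder_basis e" and "ext_radius (brick e eps) < \<infinity>"
  shows "ext_radius (brick e eps) = (SUP x\<in>brick e eps. ereal (norm x))"
proof -
  let ?E = "{x0. is_extreme_pt (brick e eps) x0}"
  obtain x0 where x0: "is_extreme_pt (brick e eps) x0"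
    using \<open>ext_radius (brick e eps) < \<infinity>\<close> unfolding ext_radius_def by (auto split: if_splits)
  then have E: "ext_radius (brick e eps) = (SUP x\<in>?E. ereal (norm x))"
    unfolding ext_radius_def by auto
  with x0 have "ereal (norm x0) \<le> ext_radius (brick e eps)"
    by (auto intro: SUP_upper)
  with \<open>ext_radius (brick e eps) < \<infinity>\<close> obtain R where R: "ext_radius (brick e eps) = ereal R"
    by (cases "ext_radius (brick e eps)") auto
  have "z \<in> cball 0 R" if "\<forall>n. \<bar>coord e n z\<bar> = eps n" for z
  proof -
    have "z \<in> ?E"
      using that is_extreme_pt_brick_iff[OF sb] by blast
    then have "ereal (norm z) \<le> ereal R"
      unfolding R[symmetric] E by (rule SUP_upper)
    then show ?thesis
      by simp
  qed
  then have "brick e eps \<subseteq> cball 0 R"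
    using x0 is_extreme_pt_brick_iff[OF sb]
    by (intro brick_subset_closed_convex[OF sb convex_cball closed_cball]) blast+
  then have "(SUP x\<in>brick e eps. ereal (norm x)) \<le> ext_radius (brick e eps)"
    using R by (auto intro!: SUP_least)
  moreover have "?E \<subseteq> brick e eps"
    unfolding is_extreme_pt_def by blast
  then have "ext_radius (brick e eps) \<le> (SUP x\<in>brick e eps. ereal (norm x))"
    unfolding E by (rule SUP_subset_mono) simp
  ultimately show ?thesis
    by (rule antisym[rotated])
qed

theorem theorem3p2:
  fixes e :: "nat \<Rightarrow> 'a::banach" and eps :: "nat \<Rightarrow> real"
  assumes "schauder_basis e"
    and "\<forall>n. norm (e n) = 1"
    and "\<forall>n. eps n \<ge> 0"
  shows "ext_radius (brick e eps) \<le> unc_radius e eps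
    \<and> (ext_radius (brick e eps) < \<infinity> \<longrightarrow>
         ext_radius (brick e eps) = (SUP x\<in>brick e eps. ereal (norm x)))
    \<and> (unc_radius e eps < \<infinity> \<longrightarrow>
         ext_radius (brick e eps) = unc_radius e eps
         \<and> unc_radius e eps = (SUP x\<in>brick e eps. ereal (norm x)))"
proof -
  note le = ext_radius_brick_le_unc_radius[OF assms(1,3)]
  have "ext_radius (brick e eps) = unc_radius e eps" if "unc_radius e eps < \<infinity>"
    using le unc_radius_le_ext_radius_brick[OF assms(1,3) that] by (rule antisym)
  with le ext_radius_brick_eq_SUP_norm[OF assms(1)] show ?thesis
    by auto
qed

end
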